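(* Assume $C^\top C\succ0$ and that $r_1$ is proper (i.e. some $\widetilde W$ has $r_1(\widetilde W)<\infty$). Let $\gamma>0$ and let $\sigma_i\downarrow0$ be a decreasing sequence of positive numbers. With $H_\sigma$ and $H$ as in the context: 1. $\inf H_{\sigma_i}\to\inf H$. 2. There is a set $N\subseteq\mathbb{N}$ with $\mathbb{N}\setminus N$ finite such that for $v\in N$ the sets $\operatorname{argmin}H_{\sigma_v}$ are nonempty and form a bounded sequence, and $\limsup_{v}(\operatorname{argmin}H_{\sigma_v})\subseteq\operatorname{argmin}H$. 3. For any sequence $\epsilon_i\downarrow0$ and any choice $\widetilde W_i\in\epsilon_i\text{-}\operatorname{argmin}H_{\sigma_i}:=\{\widetilde W: H_{\sigma_i}(\widetilde W)\le\inf H_{\sigma_i}+\epsilon_i\}$, the sequence $(\widetilde W_i)$ is bounded and all its cluster points belong to $\operatorname{argmin}H$.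
   Context: Let $n,m,M\ge1$, $p=m+n$. For $i=1,\dots,M$ let $A_i\in\mathbb{R}^{n\times n}$, $B_{2,i}\in\mathbb{R}^{n\times m}$, $F_i=\begin{bmatrix}A_i&B_{2,i}\\0&0\end{bmatrix}$. Let $B_1\in\mathbb{R}^{n\times l}$, $C\in\mathbb{R}^{q\times n}$, $D\in\mathbb{R}^{q\times m}$ with $C^\top D=0$, $D^\top D\succ0$, $B_1B_1^\top\succ0$; $Q=\begin{bmatrix}B_1B_1^\top&0\\0&0\end{bmatrix}$, $R=\begin{bmatrix}C^\top C&0\\0&D^\top D\end{bmatrix}$, $V_1=[0,\ I_m]\in\mathbb{R}^{m\times p}$, $V_2=[I_n,\ 0]\in\mathbb{R}^{n\times p}$, $\Psi_i(W)=-V_2(F_iW+WF_i^\top+Q)V_2^\top$. $\mathrm{vec}$ is column-stacking, so $(V_2\otimes V_1)\mathrm{vec}(W)=\mathrm{vec}(V_1WV_2^\top)\in\mathbb{R}^{mn}$. $\Gamma^k_+=\{\mathrm{vec}(X):X\in\mathbb{S}^k_+\}$, $\delta_S$ the indicator of $S$, $\Omega=\{\mathrm{vec}(W):W_{ij}=0\ \text{for }1\le i<j\le n\}$. For $\widetilde W=\mathrm{vec}(W)\in\mathbb{R}^{p^2}$: $r_1(\widetilde W)=\langle\mathrm{vec}(R),\widetilde W\rangle+\delta_{\Gamma^p_+}(\widetilde W)+\sum_{i=1}^M\delta_{\Gamma^n_+}(\mathrm{vec}(\Psi_i(W)))+\delta_\Omega(\widetilde W)$. For $\sigma>0$ and $t\in\mathbb{R}$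 let $f_\sigma(t)=1-e^{-t/\sigma}$, and for $x\in\mathbb{R}^{mn}$, $f_\sigma(|x|)=\sum_kf_\sigma(|x_k|)$. Define $H_\sigma(\widetilde W)=r_1(\widetilde W)+\gamma f_\sigma(|(V_2\otimes V_1)\widetilde W|)$ and $H(\widetilde W)=r_1(\widetilde W)+\gamma\|(V_2\otimes V_1)\widetilde W\|_0$, where $\|\cdot\|_0$ counts nonzero entries. For a sequence of sets $S_v$, $\limsup_vS_v$ is the outer limit: the set of cluster points of sequences $(s_v)$ with $s_v\in S_v$ along a subsequence. *)

theory Defs
  imports "HOL-Analysis.Analysis"
begin

text \<open>The dimensions n, m, l, q are encoded by finite index types
  'n, 'm, 'l, 'q; p = n + m is encoded by the sum type 'n + 'm, where the first
  n indices are Inl _ and the last m indices are Inr _.  The index type 'n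
  carries a linear order, identifying it with {1..n} (needed for Omega).
  A vector in R^(p^2) is an element of real^(('n+'m) \<times> ('n+'m)); column stacking
  vec identifies the coordinate (i,j) with the matrix entry W_ij.\<close>

definition vecM :: "real^'c^'r \<Rightarrow> real^('r \<times> 'c)" where
  "vecM X = (\<chi> k. X $ fst k $ snd k)"

definition unvecM :: "real^('r \<times> 'c) \<Rightarrow> real^'c^'r" where
  "unvecM w = (\<chi> i j. w $ (i, j))"

definition psd :: "real^'k^'k \<Rightarrow> bool" where
  "psd X \<longleftrightarrow> transpose X = X \<and> (\<forall>x. 0 \<le> x \<bullet> (X *v x))"

definition pd :: "real^'k^'k \<Rightarrow> bool" where
  "pd X \<longleftrightarrow> transpose X = X \<and> (\<forall>x. x \<noteq> 0 \<longrightarrow> 0 < x \<bullet> (X *v x))"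

definition Gamma_plus :: "(real^(('k::finite) \<times> 'k)) set" where
  "Gamma_plus = vecM ` {X. psd X}"

definition indic :: "'a set \<Rightarrow> 'a \<Rightarrow> ereal" where
  "indic S x = (if x \<in> S then 0 else \<infinity>)"

definition Fmat :: "real^'n^'n \<Rightarrow> real^'m^'n \<Rightarrow> real^('n+'m)^('n+'m)" where
  "Fmat A B2 = (\<chi> i j. case i of
      Inl a \<Rightarrow> (case j of Inl b \<Rightarrow> A $ a $ b | Inr b \<Rightarrow> B2 $ a $ b)
    | Inr _ \<Rightarrow> 0)"

definition Qmat :: "real^'l^'n \<Rightarrow> real^('n+('m::finite))^('n+'m)" where
  "Qmat B1 = (\<chi> i j. case (i, j) of
      (Inl a, Inl b) \<Rightarrow> (B1 ** transpose B1) $ a $ b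
    | _ \<Rightarrow> 0)"

definition Rmat :: "real^'n^'q \<Rightarrow> real^'m^'q \<Rightarrow> real^('n+'m)^('n+'m)" where
  "Rmat C D = (\<chi> i j. case (i, j) of
      (Inl a, Inl b) \<Rightarrow> (transpose C ** C) $ a $ b
    | (Inr a, Inr b) \<Rightarrow> (transpose D ** D) $ a $ b
    | _ \<Rightarrow> 0)"

text \<open>V1 = [0, I_m], V2 = [I_n, 0]\<close>
definition V1 :: "real^(('n::finite)+('m::finite))^'m" where
  "V1 = (\<chi> a j. if j = Inr a then 1 else 0)"

definition V2 :: "real^(('n::finite)+('m::finite))^'n" where
  "V2 = (\<chi> a j. if j = Inl a then 1 else 0)"

definition Psi :: "real^'n^'n \<Rightarrow> real^'m^'n \<Rightarrow> real^'l^'n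
    \<Rightarrow> real^('n+'m)^('n+'m) \<Rightarrow> real^'n^'n" where
  "Psi A B2 B1 W = - (V2 ** (Fmat A B2 ** W + W ** transpose (Fmat A B2) + Qmat B1)
                        ** transpose V2)"

definition Omega :: "(real^((('n::{finite,linorder})+('m::finite)) \<times> ('n+'m))) set" where
  "Omega = {vecM W | W. \<forall>i j. i < j \<longrightarrow> W $ Inl i $ Inl j = 0}"

text \<open>(V2 \<otimes> V1) vec W = vec (V1 W V2^T), an element of R^(mn)\<close>
definition KV :: "real^((('n::finite)+('m::finite)) \<times> ('n+'m)) \<Rightarrow> real^('m \<times> 'n)" where
  "KV w = vecM ((V1 :: real^('n+'m)^'m) ** unvecM w ** transpose (V2 :: real^('n+'m)^'n))"

definition r1 :: "nat \<Rightarrow> (nat \<Rightarrow> real^('n::{finite,linorder})^('n::{finite,linorder})) \<Rightarrow> (nat \<Rightarrow> real^'m^('n::{finite,linorder})) \<Rightarrow> real^'l^('n::{finite,linorder})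
    \<Rightarrow> real^('n::{finite,linorder})^'q \<Rightarrow> real^'m^'q
    \<Rightarrow> real^((('n::{finite,linorder})+'m) \<times> (('n::{finite,linorder})+'m)) \<Rightarrow> ereal" where
  "r1 M A B2 B1 C D w =
     ereal (vecM (Rmat C D) \<bullet> w) + indic Gamma_plus w
     + (\<Sum>i\<in>{1..M}. indic Gamma_plus (vecM (Psi (A i) (B2 i) B1 (unvecM w))))
     + indic Omega w"

definition fsig :: "real \<Rightarrow> real \<Rightarrow> real" where
  "fsig \<sigma> t = 1 - exp (- t / \<sigma>)"

definition fsig_abs :: "real \<Rightarrow> real^'k \<Rightarrow> real" where
  "fsig_abs \<sigma> x = (\<Sum>k\<in>UNIV. fsig \<sigma> \<bar>x $ k\<bar>)"

definition l0norm :: "real^'k \<Rightarrow> nat" where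
  "l0norm x = card {k. x $ k \<noteq> 0}"

definition Hsig where
  "Hsig M A B2 B1 C D \<gamma> \<sigma> w = r1 M A B2 B1 C D w + ereal (\<gamma> * fsig_abs \<sigma> (KV w))"

definition Hzero where
  "Hzero M A B2 B1 C D \<gamma> w = r1 M A B2 B1 C D w + ereal (\<gamma> * real (l0norm (KV w)))"

definition argminE :: "('a \<Rightarrow> ereal) \<Rightarrow> 'a set" where
  "argminE f = {x. f x = (INF y. f y)}"

definition eps_argminE :: "real \<Rightarrow> ('a \<Rightarrow> ereal) \<Rightarrow> 'a set" where
  "eps_argminE \<epsilon> f = {x. f x \<le> (INF y. f y) + ereal \<epsilon>}"

definition outer_limit :: "nat set \<Rightarrow> (nat \<Rightarrow> ('a::topological_space) set) \<Rightarrow> 'a set" where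
  "outer_limit N S = {x. \<exists>r s. strict_mono r \<and> (\<forall>k. r k \<in> N) \<and>
      (\<forall>k. s k \<in> S (r k)) \<and> (s \<longlonglongrightarrow> x)}"

end

(* H_sigma is the cost <vec R, W> + gamma f_sigma(|KV W|) on the closed feasible set of r1 and
   +infinity elsewhere.  As sigma decreases to 0, f_sigma(|t|) increases to the indicator of t ~= 0,
   so the H_(sigma_i) form an increasing sequence of lower semicontinuous functions converging
   pointwise to H, and such a sequence epi-converges to its limit.  Since C^T C and D^T D are positive
   definite, R = G^T G with G = diag(C, D) injective, so the cost dominates c * norm W on the psd
   cone and all H_sigma are uniformly level-bounded.  Epi-convergence plus uniform level-boundedness
   give convergence of the infima, existence and boundedness of minimisers, and that cluster points
   of (approximate) minimisers minimise H. *)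

theory Submission
  imports Defs
begin

section \<open>Sequential lower semicontinuity\<close>

definition seq_lsc :: "('a::topological_space \<Rightarrow> ereal) \<Rightarrow> bool" where
  "seq_lsc f \<longleftrightarrow> (\<forall>y x. y \<longlonglongrightarrow> x \<longrightarrow> f x \<le> liminf (\<lambda>k. f (y k)))"

lemma seq_lscD: "seq_lsc f \<Longrightarrow> y \<longlonglongrightarrow> x \<Longrightarrow> f x \<le> liminf (\<lambda>k. f (y k))"
  unfolding seq_lsc_def by blast

lemma seq_lsc_attains_INF:
  fixes f :: "'a::heine_borel \<Rightarrow> ereal"
  assumes lsc: "seq_lsc f" and sublevel: "\<And>K. bounded {x. f x \<le> ereal K}"
  shows "\<exists>x. f x = (INF y. f y)"
proof (cases "(INF y. f y) = \<infinity>")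
  case True
  show ?thesis
  proof
    have "(INF y. f y) \<le> f undefined" by (rule INF_lower) simp
    then show "f undefined = (INF y. f y)" using True by simp
  qed
next
  case False
  then obtain K :: real where K: "(INF y. f y) < ereal K"
    using less_PInf_Ex_of_nat by blast
  obtain u where u_range: "\<And>n. u n \<in> range f" and u: "u \<longlonglongrightarrow> (INF y. f y)"
    using Inf_as_limit[of "range f"] by auto
  define y where "y n = inv f (u n)" for n
  have fy: "f (y n) = u n" for n
    unfolding y_def using u_range by (rule f_inv_into_f)
  obtain N where N: "\<And>n. n \<ge> N \<Longrightarrow> u n < ereal K"
    using order_tendstoD(2)[OF u K] by (auto simp: eventually_sequentially)
  have "range (\<lambda>n. y (n + N)) \<subseteq> {x. f x \<le> ereal K}"
    using N fy by (auto intro: less_imp_le)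
  then have "bounded (range (\<lambda>n. y (n + N)))"
    using sublevel bounded_subset by blast
  then obtain x r where r: "strict_mono r" and yx: "(\<lambda>k. y (r k + N)) \<longlonglongrightarrow> x"
    using bounded_imp_convergent_subsequence by (fastforce simp: o_def)
  have "strict_mono (\<lambda>k. r k + N)"
    using r by (simp add: strict_mono_def)
  then have "(\<lambda>k. f (y (r k + N))) \<longlonglongrightarrow> (INF y. f y)"
    using LIMSEQ_subseq_LIMSEQ[OF u] by (simp add: fy o_def)
  then have "f x \<le> (INF y. f y)"
    using seq_lscD[OF lsc yx] by (simp add: lim_imp_Liminf)
  then show ?thesis by (metis INF_lower UNIV_I order_antisym)
qed

lemma seq_lsc_extend_by_PInf:
  fixes g :: "'a::metric_space \<Rightarrow> real"
  assumes S: "closed S" and g: "continuous_on UNIV g"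
  shows "seq_lsc (\<lambda>w. if w \<in> S then ereal (g w) else \<infinity>)"
  unfolding seq_lsc_def
proof (intro allI impI)
  fix y and x :: 'a assume yx: "y \<longlonglongrightarrow> x"
  show "(if x \<in> S then ereal (g x) else \<infinity>) \<le> liminf (\<lambda>k. if y k \<in> S then ereal (g (y k)) else \<infinity>)"
  proof (cases "x \<in> S")
    case True
    have "(\<lambda>k. g (y k)) \<longlonglongrightarrow> g x"
      using continuous_on_tendsto_compose[OF g yx] by simp
    then have "ereal (g x) = liminf (\<lambda>k. ereal (g (y k)))"
      by (intro lim_imp_Liminf[symmetric] trivial_limit_sequentially tendsto_ereal)
    also have "\<dots> \<le> liminf (\<lambda>k. if y k \<in> S then ereal (g (y k)) else \<infinity>)"
      by (intro Liminf_mono always_eventually) auto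
    finally show ?thesis using True by simp
  next
    case False
    have "eventually (\<lambda>k. y k \<notin> S) sequentially"
      using topological_tendstoD[OF yx, of "- S"] S False by auto
    then have "liminf (\<lambda>k. if y k \<in> S then ereal (g (y k)) else \<infinity>) = liminf (\<lambda>k. \<infinity>)"
      by (intro Liminf_eq) (auto elim: eventually_mono)
    then show ?thesis by (simp add: Liminf_const)
  qed
qed

lemma bounded_sublevel_if_norm_le:
  fixes f :: "'a::real_normed_vector \<Rightarrow> ereal"
  assumes "c > 0" and "\<And>x. ereal (c * norm x) \<le> f x"
  shows "bounded {x. f x \<le> ereal K}"
proof (rule bounded_subset[OF bounded_cball])
  show "{x. f x \<le> ereal K} \<subseteq> cball 0 (K / c)"
    using assms by (force simp: field_simps dest: order_trans[OF assms(2)])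
qed

section \<open>Epi-convergence of increasing sequences\<close>

locale increasing_lsc_approximation =
  fixes F :: "nat \<Rightarrow> 'a::heine_borel \<Rightarrow> ereal" and H :: "'a \<Rightarrow> ereal"
  assumes seq_lsc_F: "\<And>j. seq_lsc (F j)"
    and incseq_F: "\<And>x. incseq (\<lambda>j. F j x)"
    and F_tendsto_H: "\<And>x. (\<lambda>j. F j x) \<longlonglongrightarrow> H x"
    and bounded_sublevel_F0: "\<And>K. bounded {x. F 0 x \<le> ereal K}"
    and H_proper: "\<exists>x. H x < \<infinity>"
begin

lemma F_mono: "i \<le> j \<Longrightarrow> F i x \<le> F j x"
  using incseq_F unfolding incseq_def by blast

lemma F_le_H: "F j x \<le> H x"
  using incseq_le[OF incseq_F F_tendsto_H] .

lemma INF_F_le_INF_H: "(INF y. F j y) \<le> (INF y. H y)"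
  by (intro INF_mono) (use F_le_H in blast)

lemma F_attains_INF: "\<exists>x. F j x = (INF y. F j y)"
proof (rule seq_lsc_attains_INF[OF seq_lsc_F])
  fix K
  show "bounded {x. F j x \<le> ereal K}"
    using F_mono[of 0 j] by (blast intro: bounded_subset[OF bounded_sublevel_F0] order_trans)
qed

lemma INF_H_less_ereal: obtains K :: real where "(INF y. H y) < ereal K"
proof -
  obtain x where "H x < \<infinity>" using H_proper by blast
  moreover have "(INF y. H y) \<le> H x" by (rule INF_lower) simp
  ultimately show ?thesis using that less_PInf_Ex_of_nat by (metis not_le)
qed

lemma bounded_range_if_F_le_INF_H:
  assumes "\<And>j. F j (y j) \<le> (INF y. H y) + ereal e"
  shows "bounded (range y)"
proof -
  obtain K :: real where K: "(INF y. H y) < ereal K" by (rule INF_H_less_ereal)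
  have "F 0 (y j) \<le> ereal (K + e)" for j
  proof -
    have "F 0 (y j) \<le> (INF y. H y) + ereal e" using F_mono[of 0 j] assms[of j] by (metis le0 order_trans)
    also have "\<dots> \<le> ereal K + ereal e" using K by (intro add_right_mono) simp
    finally show ?thesis by simp
  qed
  then show ?thesis
    by (intro bounded_subset[OF bounded_sublevel_F0[of "K + e"]]) auto
qed

lemma H_le_cluster:
  assumes r: "strict_mono r" and y: "y \<longlonglongrightarrow> x" and b: "b \<longlonglongrightarrow> L"
    and yb: "\<And>k. F (r k) (y k) \<le> b k"
  shows "H x \<le> L"
proof (rule LIMSEQ_le_const2[OF F_tendsto_H], intro exI allI impI)
  \<comment> \<open>For k \<ge> j monotonicity gives F j (y k) \<le> F (r k) (y k) \<le> b k; now use lsc of the fixed F j.\<close>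
  fix j
  have "eventually (\<lambda>k. F j (y k) \<le> b k) sequentially"
  proof (rule eventually_sequentiallyI[of j])
    fix k assume "j \<le> k"
    then have "F j (y k) \<le> F (r k) (y k)" using seq_suble[OF r, of k] by (intro F_mono) simp
    then show "F j (y k) \<le> b k" using yb[of k] by (rule order_trans)
  qed
  then have "liminf (\<lambda>k. F j (y k)) \<le> liminf b" by (rule Liminf_mono)
  with seq_lscD[OF seq_lsc_F y] have "F j x \<le> liminf b" by (rule order_trans)
  also have "liminf b = L" by (rule lim_imp_Liminf[OF trivial_limit_sequentially b])
  finally show "F j x \<le> L" .
qed

lemma cluster_in_argmin_H:
  assumes "strict_mono r" "y \<longlonglongrightarrow> x" "b \<longlonglongrightarrow> (INF y. H y)" "\<And>k. F (r k) (y k) \<le> b k"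
  shows "x \<in> argminE H"
  using H_le_cluster[OF assms] INF_lower[of x UNIV H] by (simp add: argminE_def)

lemma INF_F_tendsto_INF_H: "(\<lambda>j. INF y. F j y) \<longlonglongrightarrow> (INF y. H y)"
proof -
  obtain z where z: "\<And>j. F j (z j) = (INF y. F j y)" using F_attains_INF by metis
  have "bounded (range z)"
    by (rule bounded_range_if_F_le_INF_H[where e=0]) (simp add: z INF_F_le_INF_H)
  then obtain x r where r: "strict_mono r" and zx: "(z \<circ> r) \<longlonglongrightarrow> x"
    using bounded_imp_convergent_subsequence by blast
  have "incseq (\<lambda>j. INF y. F j y)"
    unfolding incseq_def by (intro allI impI INF_mono) (use F_mono in blast)
  then have lim: "(\<lambda>j. INF y. F j y) \<longlonglongrightarrow> (SUP j. INF y. F j y)" by (rule LIMSEQ_SUP)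
  have "(INF y. H y) \<le> H x" by (rule INF_lower) simp
  also have "H x \<le> (SUP j. INF y. F j y)"
    using H_le_cluster[OF r zx[unfolded o_def] LIMSEQ_subseq_LIMSEQ[OF lim r, unfolded o_def]] z by simp
  finally have "(INF y. H y) \<le> (SUP j. INF y. F j y)" .
  moreover have "(SUP j. INF y. F j y) \<le> (INF y. H y)" by (rule SUP_least) (rule INF_F_le_INF_H)
  ultimately show ?thesis using lim by (metis order_antisym)
qed

lemma bounded_Union_argmin_F: "bounded (\<Union>j. argminE (F j))"
proof -
  obtain K :: real where K: "(INF y. H y) < ereal K" by (rule INF_H_less_ereal)
  have "argminE (F j) \<subseteq> {x. F 0 x \<le> ereal K}" for j
  proof
    fix x assume "x \<in> argminE (F j)"
    then have "F 0 x \<le> (INF y. F j y)" using F_mono[of 0 j x] by (simp add: argminE_def)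
    also have "\<dots> \<le> ereal K" using INF_F_le_INF_H K by (meson less_imp_le order_trans)
    finally show "x \<in> {x. F 0 x \<le> ereal K}" by simp
  qed
  then show ?thesis by (intro bounded_subset[OF bounded_sublevel_F0]) blast
qed

lemma outer_limit_argmin_F: "outer_limit N (\<lambda>j. argminE (F j)) \<subseteq> argminE H"
proof
  fix x assume "x \<in> outer_limit N (\<lambda>j. argminE (F j))"
  then obtain r s where r: "strict_mono r" and s: "\<And>k. s k \<in> argminE (F (r k))" and sx: "s \<longlonglongrightarrow> x"
    unfolding outer_limit_def by blast
  have "(\<lambda>k. INF y. F (r k) y) \<longlonglongrightarrow> (INF y. H y)"
    using LIMSEQ_subseq_LIMSEQ[OF INF_F_tendsto_INF_H r] by (simp add: o_def)
  then show "x \<in> argminE H"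
    by (rule cluster_in_argmin_H[OF r sx]) (use s in \<open>simp add: argminE_def\<close>)
qed

lemma bounded_eps_argmin_F:
  assumes "decseq \<epsilon>" and W: "\<And>j. W j \<in> eps_argminE (\<epsilon> j) (F j)"
  shows "bounded (range W)"
proof (rule bounded_range_if_F_le_INF_H)
  fix j
  have "F j (W j) \<le> (INF y. F j y) + ereal (\<epsilon> j)" using W by (simp add: eps_argminE_def)
  also have "\<dots> \<le> (INF y. H y) + ereal (\<epsilon> 0)"
    using INF_F_le_INF_H \<open>decseq \<epsilon>\<close> by (intro add_mono) (auto simp: decseq_def)
  finally show "F j (W j) \<le> (INF y. H y) + ereal (\<epsilon> 0)" .
qed

lemma eps_argmin_F_cluster_in_argmin:
  assumes "\<epsilon> \<longlonglongrightarrow> 0" and W: "\<And>j. W j \<in> eps_argminE (\<epsilon> j) (F j)"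
    and r: "strict_mono r" and Wx: "(W \<circ> r) \<longlonglongrightarrow> x"
  shows "x \<in> argminE H"
proof (rule cluster_in_argmin_H[OF r Wx[unfolded o_def]])
  have "(\<lambda>k. ereal (\<epsilon> (r k))) \<longlonglongrightarrow> 0"
    using LIMSEQ_subseq_LIMSEQ[OF \<open>\<epsilon> \<longlonglongrightarrow> 0\<close> r] by (simp add: o_def zero_ereal_def)
  from tendsto_add_ereal_general1[OF _ LIMSEQ_subseq_LIMSEQ[OF INF_F_tendsto_INF_H r] this]
  show "(\<lambda>k. (INF y. F (r k) y) + ereal (\<epsilon> (r k))) \<longlonglongrightarrow> (INF y. H y)"
    by (simp add: o_def)
  show "F (r k) (W (r k)) \<le> (INF y. F (r k) y) + ereal (\<epsilon> (r k))" for k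
    using W by (simp add: eps_argminE_def)
qed

end

section \<open>The objective functions\<close>

lemma unvecM_vecM [simp]: "unvecM (vecM X) = X"
  by (simp add: unvecM_def vecM_def vec_eq_iff)

lemma vecM_unvecM [simp]: "vecM (unvecM w) = w"
  by (simp add: unvecM_def vecM_def vec_eq_iff)

lemma unvecM_nth [simp]: "unvecM w $ i $ j = w $ (i, j)"
  by (simp add: unvecM_def)

lemma Gamma_plus_eq: "Gamma_plus = {w. psd (unvecM w)}"
  unfolding Gamma_plus_def by (auto intro: image_eqI[where x="unvecM _"])

lemma Omega_eq: "Omega = {w. \<forall>i j. i < j \<longrightarrow> w $ (Inl i, Inl j) = 0}"
  unfolding Omega_def by (auto simp: vecM_def intro: exI[where x="unvecM _"])

lemma KV_eq: "KV w = (\<chi> k. w $ (Inr (fst k), Inl (snd k)))"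
  by (simp add: vec_eq_iff KV_def vecM_def V1_def V2_def matrix_matrix_mult_def transpose_def
      if_distrib[of "\<lambda>x. x * _"] if_distrib[of "\<lambda>x. _ * x"] cong: if_cong)

definition feasible_set where
  "feasible_set M A B2 B1 =
     {w. psd (unvecM w) \<and> (\<forall>i\<in>{1..M}. psd (Psi (A i) (B2 i) B1 (unvecM w)))} \<inter> Omega"

lemma sum_indic: "finite I \<Longrightarrow> (\<Sum>i\<in>I. indic S (h i)) = indic {x. \<forall>i\<in>I. h i \<in> S} x"
  by (induction I rule: finite_induct) (auto simp: indic_def)

lemma r1_eq: "r1 M A B2 B1 C D w =
    (if w \<in> feasible_set M A B2 B1 then ereal (vecM (Rmat C D) \<bullet> w) else \<infinity>)"
  unfolding r1_def feasible_set_def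
  by (subst sum_indic) (auto simp: Gamma_plus_eq indic_def)

lemma Hsig_eq: "Hsig M A B2 B1 C D \<gamma> \<sigma> w = (if w \<in> feasible_set M A B2 B1
    then ereal (vecM (Rmat C D) \<bullet> w + \<gamma> * fsig_abs \<sigma> (KV w)) else \<infinity>)"
  unfolding Hsig_def r1_eq by simp

lemma Hzero_eq: "Hzero M A B2 B1 C D \<gamma> w = (if w \<in> feasible_set M A B2 B1
    then ereal (vecM (Rmat C D) \<bullet> w + \<gamma> * real (l0norm (KV w))) else \<infinity>)"
  unfolding Hzero_def r1_eq by simp

lemma continuous_on_matrix_matrix_mult [continuous_intros]:
  fixes f :: "'x::topological_space \<Rightarrow> real^'b^'a" and g :: "'x \<Rightarrow> real^'c^'b"
  shows "continuous_on S f \<Longrightarrow> continuous_on S g \<Longrightarrow> continuous_on S (\<lambda>x. f x ** g x)"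
  unfolding matrix_matrix_mult_def by (intro continuous_intros)

lemma continuous_on_matrix_vector_mult [continuous_intros]:
  fixes f :: "'x::topological_space \<Rightarrow> real^'b^'a" and g :: "'x \<Rightarrow> real^'b"
  shows "continuous_on S f \<Longrightarrow> continuous_on S g \<Longrightarrow> continuous_on S (\<lambda>x. f x *v g x)"
  unfolding matrix_vector_mult_def by (intro continuous_intros)

lemma continuous_on_transpose [continuous_intros]:
  fixes f :: "'x::topological_space \<Rightarrow> real^'b^'a"
  shows "continuous_on S f \<Longrightarrow> continuous_on S (\<lambda>x. transpose (f x))"
  unfolding transpose_def by (intro continuous_intros)

lemma continuous_on_unvecM [continuous_intros]:
  fixes f :: "'x::topological_space \<Rightarrow> real^('a::finite \<times> 'b::finite)"
  shows "continuous_on S f \<Longrightarrow> continuous_on S (\<lambda>x. unvecM (f x))"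
  unfolding unvecM_def by (intro continuous_intros)

lemma closed_psd: "closed {X::real^'k^'k. psd X}"
proof -
  have "{X::real^'k^'k. psd X} = {X. transpose X = X} \<inter> (\<Inter>x. {X. 0 \<le> x \<bullet> (X *v x)})"
    by (auto simp: psd_def)
  then show ?thesis
    by (simp only:) (intro closed_Int closed_INT ballI closed_Collect_eq closed_Collect_le continuous_intros)
qed

lemma closed_Collect_psd: "continuous_on UNIV f \<Longrightarrow> closed {x. psd (f x :: real^'k^'k)}"
  using closed_vimage[OF closed_psd, of f] by (simp add: vimage_def)

lemma closed_Omega: "closed Omega"
  unfolding Omega_eq
proof (intro closed_Collect_all)
  fix i j :: "'n::{finite,linorder}"
  show "closed {w::real^(('n+'m::finite) \<times> ('n+'m)). i < j \<longrightarrow> w $ (Inl i, Inl j) = 0}"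
    by (cases "i < j") (simp_all add: closed_Collect_eq continuous_on_component)
qed

lemma closed_feasible_set: "closed (feasible_set M A B2 B1)"
proof -
  have "closed {w. psd (Psi (A i) (B2 i) B1 (unvecM w))}" for i
    unfolding Psi_def by (intro closed_Collect_psd continuous_intros)
  moreover have "closed {w::real^(('n::{finite,linorder}+'m::finite) \<times> ('n+'m)). psd (unvecM w)}"
    by (intro closed_Collect_psd continuous_intros)
  ultimately show ?thesis
    unfolding feasible_set_def Collect_conj_eq Collect_ball_eq
    by (intro closed_Int closed_INT closed_Omega) auto
qed

section \<open>The smoothed l0 penalty\<close>

lemma fsig_nonneg: "\<sigma> > 0 \<Longrightarrow> t \<ge> 0 \<Longrightarrow> 0 \<le> fsig \<sigma> t"
  unfolding fsig_def by simp

lemma fsig_antimono: "0 < \<sigma>' \<Longrightarrow> \<sigma>' \<le> \<sigma> \<Longrightarrow> t \<ge> 0 \<Longrightarrow> fsig \<sigma> t \<le> fsig \<sigma>' t"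
  unfolding fsig_def by (simp add: frac_le)

lemma fsig_tendsto:
  assumes pos: "\<And>i. \<sigma> i > 0" and lim: "\<sigma> \<longlonglongrightarrow> 0" and "t > 0"
  shows "(\<lambda>i. fsig (\<sigma> i) t) \<longlonglongrightarrow> 1"
proof -
  have "filterlim \<sigma> (at_right 0) sequentially"
    using pos by (intro tendsto_imp_filterlim_at_right[OF lim]) auto
  then have "filterlim (\<lambda>i. t * inverse (\<sigma> i)) at_top sequentially"
    by (intro filterlim_tendsto_pos_mult_at_top[OF tendsto_const \<open>t > 0\<close>]
        filterlim_compose[OF filterlim_inverse_at_top_right])
  then have "(\<lambda>i. exp (- (t * inverse (\<sigma> i)))) \<longlonglongrightarrow> 0"
    by (intro filterlim_compose[OF exp_at_bot] filterlim_compose[OF filterlim_uminus_at_bot_at_top])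
  from tendsto_diff[OF tendsto_const[of 1] this] show ?thesis
    by (simp add: fsig_def divide_inverse)
qed

lemma fsig_abs_nonneg: "\<sigma> > 0 \<Longrightarrow> 0 \<le> fsig_abs \<sigma> x"
  unfolding fsig_abs_def by (intro sum_nonneg fsig_nonneg) auto

lemma fsig_abs_antimono: "0 < \<sigma>' \<Longrightarrow> \<sigma>' \<le> \<sigma> \<Longrightarrow> fsig_abs \<sigma> x \<le> fsig_abs \<sigma>' x"
  unfolding fsig_abs_def by (intro sum_mono fsig_antimono) auto

lemma fsig_abs_tendsto_l0norm:
  assumes "\<And>i. \<sigma> i > 0" and "\<sigma> \<longlonglongrightarrow> 0"
  shows "(\<lambda>i. fsig_abs (\<sigma> i) x) \<longlonglongrightarrow> real (l0norm x)"
proof -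
  have "(\<lambda>i. fsig (\<sigma> i) \<bar>x $ k\<bar>) \<longlonglongrightarrow> (if x $ k = 0 then 0 else 1)" for k
    using fsig_tendsto[OF assms, of "\<bar>x $ k\<bar>"] by (simp add: fsig_def)
  then have "(\<lambda>i. fsig_abs (\<sigma> i) x) \<longlonglongrightarrow> (\<Sum>k\<in>UNIV. if x $ k = 0 then 0 else 1)"
    unfolding fsig_abs_def by (intro tendsto_sum)
  also have "(\<Sum>k\<in>UNIV. if x $ k = 0 then 0 else 1) = real (l0norm x)"
    unfolding l0norm_def by (simp add: sum.If_cases Collect_neg_eq[symmetric])
  finally show ?thesis .
qed

section \<open>Coercivity of the linear cost on the psd cone\<close>

lemma unvecM_scaleR [simp]: "unvecM (a *\<^sub>R w) = a *\<^sub>R unvecM w"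
  by (simp add: vec_eq_iff)

lemma psd_scaleR: "psd X \<Longrightarrow> 0 \<le> a \<Longrightarrow> psd (a *\<^sub>R X)"
  unfolding psd_def by (auto simp: transpose_scalar scaleR_matrix_vector_assoc[symmetric])

lemma psd_quadratic_form_eq_0:
  fixes W :: "real^'k^'k"
  assumes "psd W" and "x \<bullet> (W *v x) = 0"
  shows "W *v x = 0"
proof -
  \<comment> \<open>With v = W x, the form at x + t v is 2 t |v|^2 + t^2 (v \<bullet> W v), negative for small t < 0 unless v = 0.\<close>
  define v where "v = W *v x"
  have sym: "transpose W = W" and nonneg: "\<And>u. 0 \<le> u \<bullet> (W *v u)"
    using \<open>psd W\<close> unfolding psd_def by auto
  define b where "b = v \<bullet> v"
  define c where "c = v \<bullet> (W *v v)"
  have "c \<ge> 0" unfolding c_def by (rule nonneg)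
  have quadratic: "0 \<le> 2 * t * b + t\<^sup>2 * c" for t
  proof -
    have "x \<bullet> (W *v v) = v \<bullet> (W *v x)"
      by (metis sym dot_lmul_matrix inner_commute transpose_matrix_vector)
    then have "(x + t *\<^sub>R v) \<bullet> (W *v (x + t *\<^sub>R v)) = 2 * t * b + t\<^sup>2 * c"
      using assms(2) unfolding b_def c_def v_def
      by (simp add: matrix_vector_right_distrib matrix_vector_mult_scaleR inner_add_left inner_add_right
          power2_eq_square distrib_left)
    then show ?thesis using nonneg[of "x + t *\<^sub>R v"] by simp
  qed
  have "b = 0"
  proof (rule ccontr)
    assume "b \<noteq> 0"
    then have "b > 0" unfolding b_def by simp
    define t where "t = - b / (c + 1)"
    have "t < 0" unfolding t_def using \<open>b > 0\<close> \<open>c \<ge> 0\<close> by (simp add: divide_neg_pos)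
    have "t * c = - b - t"
      unfolding t_def using \<open>c \<ge> 0\<close> by (simp add: field_simps)
    have "2 * t * b + t\<^sup>2 * c = t * (2 * b + t * c)"
      by (simp add: power2_eq_square algebra_simps)
    also have "\<dots> = t * (b - t)" using \<open>t * c = - b - t\<close> by simp
    also have "\<dots> < 0" using \<open>t < 0\<close> \<open>b > 0\<close> by (intro mult_neg_pos) auto
    finally show False using quadratic[of t] by simp
  qed
  then show ?thesis unfolding b_def v_def by simp
qed

lemma inner_vecM_gram:
  fixes G :: "real^'a^'k"
  shows "vecM (transpose G ** G) \<bullet> w = (\<Sum>k\<in>UNIV. (G $ k) \<bullet> (unvecM w *v (G $ k)))"
proof -
  have "vecM (transpose G ** G) \<bullet> w = (\<Sum>i\<in>UNIV. \<Sum>j\<in>UNIV. (\<Sum>k\<in>UNIV. G$k$i * G$k$j) * w$(i,j))"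
    unfolding inner_vec_def
    by (simp add: sum.cartesian_product split_beta vecM_def matrix_matrix_mult_def transpose_def mult.commute)
  also have "\<dots> = (\<Sum>i\<in>UNIV. \<Sum>j\<in>UNIV. \<Sum>k\<in>UNIV. G$k$i * (w$(i,j) * G$k$j))"
    by (simp add: sum_distrib_left sum_distrib_right mult_ac)
  also have "\<dots> = (\<Sum>i\<in>UNIV. \<Sum>k\<in>UNIV. \<Sum>j\<in>UNIV. G$k$i * (w$(i,j) * G$k$j))"
    by (intro sum.cong refl sum.swap)
  also have "\<dots> = (\<Sum>k\<in>UNIV. \<Sum>i\<in>UNIV. \<Sum>j\<in>UNIV. G$k$i * (w$(i,j) * G$k$j))"
    by (rule sum.swap)
  also have "\<dots> = (\<Sum>k\<in>UNIV. (G $ k) \<bullet> (unvecM w *v (G $ k)))"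
    by (simp add: inner_vec_def matrix_vector_mult_def sum_distrib_left)
  finally show ?thesis .
qed

lemma inner_vecM_gram_pos:
  fixes G :: "real^'a^'k"
  assumes inj: "\<And>z. G *v z = 0 \<Longrightarrow> z = 0" and W: "psd (unvecM w)" and "w \<noteq> 0"
  shows "0 < vecM (transpose G ** G) \<bullet> w"
proof (rule ccontr)
  let ?q = "\<lambda>k. (G $ k) \<bullet> (unvecM w *v (G $ k))"
  have nonneg: "0 \<le> ?q k" for k using W unfolding psd_def by blast
  assume "\<not> 0 < vecM (transpose G ** G) \<bullet> w"
  moreover have "0 \<le> sum ?q UNIV" by (intro sum_nonneg nonneg)
  ultimately have "sum ?q UNIV = 0" unfolding inner_vecM_gram by linarith
  then have "?q k = 0" for k using nonneg by (simp add: sum_nonneg_eq_0_iff)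
  then have kernel: "unvecM w *v (G $ k) = 0" for k by (rule psd_quadratic_form_eq_0[OF W])
  have "unvecM w $ i = 0" for i
    using kernel by (intro inj) (simp add: vec_eq_iff matrix_vector_mult_def mult.commute)
  then show False using \<open>w \<noteq> 0\<close> by (auto simp: vec_eq_iff)
qed

lemma gram_coercive_on_psd:
  fixes G :: "real^'a^'k"
  assumes inj: "\<And>z. G *v z = 0 \<Longrightarrow> z = 0"
  obtains c where "c > 0" and "\<And>w. psd (unvecM w) \<Longrightarrow> c * norm w \<le> vecM (transpose G ** G) \<bullet> w"
proof -
  let ?f = "\<lambda>w. vecM (transpose G ** G) \<bullet> w"
  \<comment> \<open>c is the minimum of the form on the compact slice of the psd cone by the unit sphere.\<close>
  define K where "K = {w. psd (unvecM w)} \<inter> sphere (0::real^('a \<times> 'a)) 1"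
  have "compact K"
    unfolding K_def by (intro closed_Int_compact closed_Collect_psd continuous_intros compact_sphere)
  obtain c where "c > 0" and c: "\<And>u. u \<in> K \<Longrightarrow> c \<le> ?f u"
  proof (cases "K = {}")
    case True
    then show ?thesis using that[of 1] by simp
  next
    case False
    have "continuous_on K ?f" by (intro continuous_intros)
    then obtain u0 where "u0 \<in> K" and "\<And>u. u \<in> K \<Longrightarrow> ?f u0 \<le> ?f u"
      using continuous_attains_inf[OF \<open>compact K\<close> False] by blast
    moreover have "0 < ?f u0"
      using \<open>u0 \<in> K\<close> by (intro inner_vecM_gram_pos[OF inj]) (auto simp: K_def)
    ultimately show ?thesis using that by blast
  qed
  have "c * norm w \<le> ?f w" if "psd (unvecM w)" for w
  proof (cases "w = 0")
    case False
    have "psd (unvecM (w /\<^sub>R norm w))"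
      using that by (simp add: psd_scaleR)
    then have "c \<le> ?f (w /\<^sub>R norm w)" using False by (intro c) (simp add: K_def)
    then show ?thesis using False by (simp add: field_simps)
  qed simp
  with \<open>c > 0\<close> show ?thesis using that by blast
qed

definition block_diag :: "real^'n^'q \<Rightarrow> real^'m^'q \<Rightarrow> real^('n+'m)^('q+'q)" where
  "block_diag C D = (\<chi> k j. case (k, j) of
      (Inl q, Inl a) \<Rightarrow> C $ q $ a | (Inr q, Inr b) \<Rightarrow> D $ q $ b | _ \<Rightarrow> 0)"

lemma sum_UNIV_Plus:
  fixes f :: "'a::finite + 'b::finite \<Rightarrow> 'c::comm_monoid_add"
  shows "(\<Sum>k\<in>UNIV. f k) = (\<Sum>a\<in>UNIV. f (Inl a)) + (\<Sum>b\<in>UNIV. f (Inr b))"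
  using sum.Plus[of "UNIV::'a set" "UNIV::'b set" f] by (simp add: o_def)

lemma Rmat_eq_gram: "Rmat C D = transpose (block_diag C D) ** block_diag C D"
  unfolding vec_eq_iff
proof (intro allI)
  fix i j :: "'a + 'b"
  show "Rmat C D $ i $ j = (transpose (block_diag C D) ** block_diag C D) $ i $ j"
    by (cases i; cases j)
      (simp_all add: Rmat_def block_diag_def matrix_matrix_mult_def transpose_def sum_UNIV_Plus)
qed

lemma pd_gram_kernel: "pd (transpose C ** C) \<Longrightarrow> C *v x = 0 \<Longrightarrow> x = 0"
  unfolding pd_def by (metis inner_zero_right less_irrefl matrix_vector_mul_assoc matrix_vector_mult_0_right)

lemma block_diag_kernel:
  assumes "pd (transpose C ** C)" "pd (transpose D ** D)" and "block_diag C D *v z = 0"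
  shows "z = 0"
proof -
  have "C *v (\<chi> a. z $ Inl a) = 0" "D *v (\<chi> a. z $ Inr a) = 0"
    using assms(3) unfolding vec_eq_iff
    by (auto simp: block_diag_def matrix_vector_mult_def sum_UNIV_Plus dest: spec[of _ "Inl _"] spec[of _ "Inr _"])
  then have "(\<chi> a. z $ Inl a) = 0" "(\<chi> a. z $ Inr a) = 0"
    using pd_gram_kernel assms(1,2) by blast+
  then show ?thesis by (simp add: vec_eq_iff) (metis sum.exhaust)
qed

lemma Rmat_coercive_on_psd:
  assumes "pd (transpose C ** C)" "pd (transpose D ** D)"
  obtains c where "c > 0" and "\<And>w. psd (unvecM w) \<Longrightarrow> c * norm w \<le> vecM (Rmat C D) \<bullet> w"
  unfolding Rmat_eq_gram using gram_coercive_on_psd block_diag_kernel[OF assms] by metis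

section \<open>Approximation of H by H_sigma\<close>

lemma seq_lsc_Hsig: "\<sigma> \<noteq> 0 \<Longrightarrow> seq_lsc (Hsig M A B2 B1 C D \<gamma> \<sigma>)"
  unfolding Hsig_eq[abs_def] KV_eq fsig_abs_def fsig_def
  by (intro seq_lsc_extend_by_PInf closed_feasible_set continuous_intros) auto

lemma Hsig_antimono:
  "0 < \<sigma>' \<Longrightarrow> \<sigma>' \<le> \<sigma> \<Longrightarrow> 0 \<le> \<gamma> \<Longrightarrow> Hsig M A B2 B1 C D \<gamma> \<sigma> w \<le> Hsig M A B2 B1 C D \<gamma> \<sigma>' w"
  unfolding Hsig_eq by (auto intro: mult_left_mono fsig_abs_antimono)

lemma Hsig_tendsto_Hzero:
  assumes "\<And>i. \<sigma> i > 0" and "\<sigma> \<longlonglongrightarrow> 0"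
  shows "(\<lambda>i. Hsig M A B2 B1 C D \<gamma> (\<sigma> i) w) \<longlonglongrightarrow> Hzero M A B2 B1 C D \<gamma> w"
  unfolding Hsig_eq Hzero_eq
  by (auto intro!: tendsto_add tendsto_mult fsig_abs_tendsto_l0norm assms)

lemma Hsig_ge_norm:
  assumes "\<And>w. psd (unvecM w) \<Longrightarrow> c * norm w \<le> vecM (Rmat C D) \<bullet> w"
    and "\<sigma> > 0" "\<gamma> \<ge> 0"
  shows "ereal (c * norm w) \<le> Hsig M A B2 B1 C D \<gamma> \<sigma> w"
proof (cases "w \<in> feasible_set M A B2 B1")
  case True
  then have "c * norm w \<le> vecM (Rmat C D) \<bullet> w"
    using assms(1) by (simp add: feasible_set_def)
  moreover have "0 \<le> \<gamma> * fsig_abs \<sigma> (KV w)"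
    using assms(2,3) by (simp add: fsig_abs_nonneg)
  ultimately show ?thesis using True by (simp add: Hsig_eq)
qed (simp add: Hsig_eq)

lemma increasing_lsc_approximation_Hsig:
  fixes A :: "nat \<Rightarrow> real^('n::{finite,linorder})^('n::{finite,linorder})"
    and B2 :: "nat \<Rightarrow> real^('m::finite)^('n::{finite,linorder})"
    and B1 :: "real^('l::finite)^('n::{finite,linorder})"
    and C :: "real^('n::{finite,linorder})^('q::finite)"
    and D :: "real^('m::finite)^('q::finite)"
  assumes CC: "pd (transpose C ** C)" and DD: "pd (transpose D ** D)"
    and proper: "\<exists>w. r1 M A B2 B1 C D w < \<infinity>"
    and "\<gamma> > 0" and sig_pos: "\<And>i. \<sigma> i > 0" and "decseq \<sigma>" and "\<sigma> \<longlonglongrightarrow> 0"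
  shows "increasing_lsc_approximation (\<lambda>i. Hsig M A B2 B1 C D \<gamma> (\<sigma> i)) (Hzero M A B2 B1 C D \<gamma>)"
proof
  obtain c where "c > 0" and c: "\<And>w. psd (unvecM w) \<Longrightarrow> c * norm w \<le> vecM (Rmat C D) \<bullet> w"
    using Rmat_coercive_on_psd[OF CC DD] by blast
  show "bounded {x. Hsig M A B2 B1 C D \<gamma> (\<sigma> 0) x \<le> ereal K}" for K
    using \<open>\<gamma> > 0\<close>
    by (intro bounded_sublevel_if_norm_le[OF \<open>c > 0\<close>] Hsig_ge_norm[OF c sig_pos]) auto
  show "seq_lsc (Hsig M A B2 B1 C D \<gamma> (\<sigma> j))" for j
    using sig_pos[of j] by (intro seq_lsc_Hsig) simp
  show "incseq (\<lambda>j. Hsig M A B2 B1 C D \<gamma> (\<sigma> j) x)" for x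
    using \<open>decseq \<sigma>\<close> sig_pos \<open>\<gamma> > 0\<close> unfolding incseq_def decseq_def
    by (auto intro: Hsig_antimono)
  show "(\<lambda>j. Hsig M A B2 B1 C D \<gamma> (\<sigma> j) x) \<longlonglongrightarrow> Hzero M A B2 B1 C D \<gamma> x" for x
    using sig_pos \<open>\<sigma> \<longlonglongrightarrow> 0\<close> by (rule Hsig_tendsto_Hzero)
  show "\<exists>x. Hzero M A B2 B1 C D \<gamma> x < \<infinity>"
    using proper by (auto simp: r1_eq Hzero_eq split: if_splits)
qed

theorem theorem25:
  fixes M :: nat
    and A :: "nat \<Rightarrow> real^('n::{finite,linorder})^('n::{finite,linorder})"
    and B2 :: "nat \<Rightarrow> real^('m::finite)^('n::{finite,linorder})"
    and B1 :: "real^('l::finite)^('n::{finite,linorder})"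
    and C :: "real^('n::{finite,linorder})^('q::finite)"
    and D :: "real^('m::finite)^('q::finite)"
    and \<gamma> :: real
    and \<sigma> :: "nat \<Rightarrow> real"
  assumes M: "M \<ge> 1"
    and CD: "transpose C ** D = 0"
    and DD: "pd (transpose D ** D)"
    and BB: "pd (B1 ** transpose B1)"
    and CC: "pd (transpose C ** C)"
    and proper: "\<exists>w. r1 M A B2 B1 C D w < \<infinity>"
    and gamma: "\<gamma> > 0"
    and sig_pos: "\<forall>i. \<sigma> i > 0"
    and sig_dec: "decseq \<sigma>"
    and sig_lim: "\<sigma> \<longlonglongrightarrow> 0"
  shows
    "((\<lambda>i. INF w. Hsig M A B2 B1 C D \<gamma> (\<sigma> i) w)
        \<longlonglongrightarrow> (INF w. Hzero M A B2 B1 C D \<gamma> w))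
   \<and>
    (\<exists>N::nat set. finite (UNIV - N)
       \<and> (\<forall>v\<in>N. argminE (Hsig M A B2 B1 C D \<gamma> (\<sigma> v)) \<noteq> {})
       \<and> bounded (\<Union>v\<in>N. argminE (Hsig M A B2 B1 C D \<gamma> (\<sigma> v)))
       \<and> outer_limit N (\<lambda>v. argminE (Hsig M A B2 B1 C D \<gamma> (\<sigma> v)))
           \<subseteq> argminE (Hzero M A B2 B1 C D \<gamma>))
   \<and>
    (\<forall>(\<epsilon>::nat \<Rightarrow> real) W. (\<forall>i. \<epsilon> i > 0) \<and> decseq \<epsilon> \<and> \<epsilon> \<longlonglongrightarrow> 0 \<and>
       (\<forall>i. W i \<in> eps_argminE (\<epsilon> i) (Hsig M A B2 B1 C D \<gamma> (\<sigma> i))) \<longrightarrow>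
       bounded (range W) \<and>
       (\<forall>x r. strict_mono r \<and> (W \<circ> r) \<longlonglongrightarrow> x \<longrightarrow> x \<in> argminE (Hzero M A B2 B1 C D \<gamma>)))"
proof -
  interpret increasing_lsc_approximation "\<lambda>i. Hsig M A B2 B1 C D \<gamma> (\<sigma> i)" "Hzero M A B2 B1 C D \<gamma>"
    using increasing_lsc_approximation_Hsig[OF CC DD proper gamma] sig_pos sig_dec sig_lim by blast
  have "argminE (Hsig M A B2 B1 C D \<gamma> (\<sigma> v)) \<noteq> {}" for v
    using F_attains_INF[of v] by (auto simp: argminE_def)
  then show ?thesis
    using INF_F_tendsto_INF_H bounded_Union_argmin_F outer_limit_argmin_F bounded_eps_argmin_F
    by (auto intro!: exI[of _ UNIV] eps_argmin_F_cluster_in_argmin)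
qed

end
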